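(* Let $(A,\to,1)$ be any algebra of type $(2,0)$. Then the following implications hold: (0) (Re) implies (S); (00) (M) implies (N); (1) (L) and (An) imply (N); (2) (K) and (An) imply (N); (3) (C) and (An) imply (Ex); (3') (Ex) and (Re) imply (C); (4) (Re) and (Ex) imply (D); (5) (Re), (Ex) and (An) imply (M); (5') (Re), (Ex) and (An) imply (N); (6) (Re) and (K) imply (L); (7) (N) and (K) imply (L); (7') (M) and (K) imply (L); (8) (Re), (L) and (Ex) imply (K); (9) (M), (L) and (B) imply (K); (9') (M), (L) and ( ** ) imply (K); (10) if (Ex) holds, then (B) holds if and only if (BB) holds; (10') (Ex) and (B) imply (BB); (10'') (Ex) and (BB) imply (B); (11) (Re), (Ex) and ( * ) imply (BB); (12) (N) and (B) imply ( * ); (12') (M) and (B) imply ( * ); (13) (N) and ( * ) imply (Tr); (13') (M) and ( * ) imply (Tr); (14) (N) and (B) imply (Tr); (14') (M) and (B) imply (Tr); (15) (N) and (BB) imply ( ** ); (15') (M) and (BB) imply ( ** ); (16) (N) and ( ** ) imply (Tr); (16') (M) and ( ** ) imply (Tr); (17) (N) and (BB) imply (Tr); (17') (M) and (BB) imply (Tr); (18) (M) and (BB) imply (Re); (18') (M) and (BB) imply (D); (19) (M) and (B) imply (Re); (20) (BB), (D) and (N) imply (C); (20') (M) and (BB) imply (C); (21) (BB), (D), (N) and (An) imply (Ex); (21') (BB), (D), (L) and (An) imply (Ex); (21'') (M), (BB) and (An) imply (Ex); (22) (B), (C), (K) and (An) imply (Re); (23) (BB), (D), (Re) and (An) imply (N);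 (24) (Re), (Ex) and (Tr) imply ( ** ).
   Context: An algebra $(A,\to,1)$ of type $(2,0)$ is a set $A$ with a binary operation $\to$ and a constant $1\in A$. The following properties are considered, each required for all $x,y,z\in A$: (An) $x\to y=1$ and $y\to x=1$ imply $x=y$; (B) $(y\to z)\to((x\to y)\to(x\to z))=1$; (BB) $(y\to z)\to((z\to x)\to(y\to x))=1$; ( * ) $y\to z=1$ implies $(x\to y)\to(x\to z)=1$; ( ** ) $y\to z=1$ implies $(z\to x)\to(y\to x)=1$; (C) $(x\to(y\to z))\to(y\to(x\to z))=1$; (D) $y\to((y\to x)\to x)=1$; (Ex) $x\to(y\to z)=y\to(x\to z)$; (K) $x\to(y\to x)=1$; (L) $x\to 1=1$; (M) $1\to x=x$; (N) $1\to x=1$ implies $x=1$; (Re) $x\to x=1$; (S) $x=y$ implies $x\to y=1$; (Tr) $x\to y=1$ and $y\to z=1$ imply $x\to z=1$. *)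

theory Defs
  imports Main
begin

definition pAn :: "('a \<Rightarrow> 'a \<Rightarrow> 'a) \<Rightarrow> 'a \<Rightarrow> bool" where
  "pAn imp one \<longleftrightarrow> (\<forall>x y. imp x y = one \<and> imp y x = one \<longrightarrow> x = y)"
definition pB :: "('a \<Rightarrow> 'a \<Rightarrow> 'a) \<Rightarrow> 'a \<Rightarrow> bool" where
  "pB imp one \<longleftrightarrow> (\<forall>x y z. imp (imp y z) (imp (imp x y) (imp x z)) = one)"
definition pBB :: "('a \<Rightarrow> 'a \<Rightarrow> 'a) \<Rightarrow> 'a \<Rightarrow> bool" where
  "pBB imp one \<longleftrightarrow> (\<forall>x y z. imp (imp y z) (imp (imp z x) (imp y x)) = one)"
definition pStar :: "('a \<Rightarrow> 'a \<Rightarrow> 'a) \<Rightarrow> 'a \<Rightarrow> bool" where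
  "pStar imp one \<longleftrightarrow> (\<forall>x y z. imp y z = one \<longrightarrow> imp (imp x y) (imp x z) = one)"
definition pStarStar :: "('a \<Rightarrow> 'a \<Rightarrow> 'a) \<Rightarrow> 'a \<Rightarrow> bool" where
  "pStarStar imp one \<longleftrightarrow> (\<forall>x y z. imp y z = one \<longrightarrow> imp (imp z x) (imp y x) = one)"
definition pC :: "('a \<Rightarrow> 'a \<Rightarrow> 'a) \<Rightarrow> 'a \<Rightarrow> bool" where
  "pC imp one \<longleftrightarrow> (\<forall>x y z. imp (imp x (imp y z)) (imp y (imp x z)) = one)"
definition pD :: "('a \<Rightarrow> 'a \<Rightarrow> 'a) \<Rightarrow> 'a \<Rightarrow> bool" where
  "pD imp one \<longleftrightarrow> (\<forall>x y. imp y (imp (imp y x) x) = one)"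
definition pEx :: "('a \<Rightarrow> 'a \<Rightarrow> 'a) \<Rightarrow> 'a \<Rightarrow> bool" where
  "pEx imp one \<longleftrightarrow> (\<forall>x y z. imp x (imp y z) = imp y (imp x z))"
definition pK :: "('a \<Rightarrow> 'a \<Rightarrow> 'a) \<Rightarrow> 'a \<Rightarrow> bool" where
  "pK imp one \<longleftrightarrow> (\<forall>x y. imp x (imp y x) = one)"
definition pL :: "('a \<Rightarrow> 'a \<Rightarrow> 'a) \<Rightarrow> 'a \<Rightarrow> bool" where
  "pL imp one \<longleftrightarrow> (\<forall>x. imp x one = one)"
definition pM :: "('a \<Rightarrow> 'a \<Rightarrow> 'a) \<Rightarrow> 'a \<Rightarrow> bool" where
  "pM imp one \<longleftrightarrow> (\<forall>x. imp one x = x)"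
definition pN :: "('a \<Rightarrow> 'a \<Rightarrow> 'a) \<Rightarrow> 'a \<Rightarrow> bool" where
  "pN imp one \<longleftrightarrow> (\<forall>x. imp one x = one \<longrightarrow> x = one)"
definition pRe :: "('a \<Rightarrow> 'a \<Rightarrow> 'a) \<Rightarrow> 'a \<Rightarrow> bool" where
  "pRe imp one \<longleftrightarrow> (\<forall>x. imp x x = one)"
definition pS :: "('a \<Rightarrow> 'a \<Rightarrow> 'a) \<Rightarrow> 'a \<Rightarrow> bool" where
  "pS imp one \<longleftrightarrow> (\<forall>x y. x = y \<longrightarrow> imp x y = one)"
definition pTr :: "('a \<Rightarrow> 'a \<Rightarrow> 'a) \<Rightarrow> 'a \<Rightarrow> bool" where
  "pTr imp one \<longleftrightarrow> (\<forall>x y z. imp x y = one \<and> imp y z = one \<longrightarrow> imp x z = one)"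

end

theory Submission
  imports Defs
begin

text \<open>Each implication is obtained by instantiating the defining identities with \<open>1\<close> or with
  repeated variables and then simplifying with (M), (Re) or (L). The less direct ones rest on
  two observations: (Ex) turns (B) into (BB) and (y \<rightarrow> (y \<rightarrow> x) \<rightarrow> x) into
  ((y \<rightarrow> x) \<rightarrow> y \<rightarrow> x), which gives (D); and once \<open>1 \<rightarrow> a = 1\<close> forces \<open>a = 1\<close>, the
  conditions (*) and (**) with \<open>y \<rightarrow> z = 1\<close> and \<open>x \<rightarrow> y = 1\<close> collapse to transitivity.\<close>

lemma pS_if_pRe: "pRe imp one \<Longrightarrow> pS imp one"
  unfolding pRe_def pS_def by blast

lemma pN_if_pM: "pM imp one \<Longrightarrow> pN imp one"
  unfolding pM_def pN_def by simp

lemma pN_if_pL_pAn: "pL imp one \<Longrightarrow> pAn imp one \<Longrightarrow> pN imp one"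
  unfolding pL_def pAn_def pN_def by metis

lemma pN_if_pK_pAn: "pK imp one \<Longrightarrow> pAn imp one \<Longrightarrow> pN imp one"
  unfolding pK_def pAn_def pN_def by metis

lemma pEx_if_pC_pAn: "pC imp one \<Longrightarrow> pAn imp one \<Longrightarrow> pEx imp one"
  unfolding pC_def pAn_def pEx_def by metis

lemma pC_if_pEx_pRe: "pEx imp one \<Longrightarrow> pRe imp one \<Longrightarrow> pC imp one"
  unfolding pEx_def pRe_def pC_def by metis

lemma pD_if_pRe_pEx: "pRe imp one \<Longrightarrow> pEx imp one \<Longrightarrow> pD imp one"
  unfolding pRe_def pEx_def pD_def by metis

lemma imp_one_imp_self_eq_one_if_pRe_pEx:
  assumes "pRe imp one" and "pEx imp one"
  shows "imp x (imp one x) = one"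
proof -
  have "imp x (imp one x) = imp one (imp x x)"
    using \<open>pEx imp one\<close> unfolding pEx_def by blast
  also have "\<dots> = imp one one"
    using \<open>pRe imp one\<close> unfolding pRe_def by simp
  finally show ?thesis
    using \<open>pRe imp one\<close> unfolding pRe_def by simp
qed

lemma pN_if_pRe_pEx_pAn:
  assumes "pRe imp one" and "pEx imp one" and "pAn imp one"
  shows "pN imp one"
  unfolding pN_def
proof (intro allI impI)
  fix x
  assume "imp one x = one"
  moreover from this have "imp x one = one"
    using imp_one_imp_self_eq_one_if_pRe_pEx [OF assms(1,2), of x] by simp
  ultimately show "x = one"
    using \<open>pAn imp one\<close> unfolding pAn_def by blast
qed

lemma pM_if_pRe_pEx_pAn:
  assumes "pRe imp one" and "pEx imp one" and "pAn imp one"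
  shows "pM imp one"
  unfolding pM_def
proof
  fix x
  have "imp one (imp (imp one x) x) = one"
    using pD_if_pRe_pEx [OF assms(1,2)] unfolding pD_def by blast
  then have "imp (imp one x) x = one"
    using pN_if_pRe_pEx_pAn [OF assms] unfolding pN_def by blast
  moreover have "imp x (imp one x) = one"
    using imp_one_imp_self_eq_one_if_pRe_pEx [OF assms(1,2)] .
  ultimately show "imp one x = x"
    using \<open>pAn imp one\<close> unfolding pAn_def by blast
qed

lemma pL_if_pRe_pK: "pRe imp one \<Longrightarrow> pK imp one \<Longrightarrow> pL imp one"
  unfolding pRe_def pK_def pL_def by metis

lemma pL_if_pN_pK: "pN imp one \<Longrightarrow> pK imp one \<Longrightarrow> pL imp one"
  unfolding pN_def pK_def pL_def by metis

lemma pK_if_pRe_pL_pEx: "pRe imp one \<Longrightarrow> pL imp one \<Longrightarrow> pEx imp one \<Longrightarrow> pK imp one"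
  unfolding pRe_def pL_def pEx_def pK_def by metis

lemma pK_if_pM_pL_pB: "pM imp one \<Longrightarrow> pL imp one \<Longrightarrow> pB imp one \<Longrightarrow> pK imp one"
  unfolding pM_def pL_def pB_def pK_def by metis

lemma pK_if_pM_pL_pStarStar:
  "pM imp one \<Longrightarrow> pL imp one \<Longrightarrow> pStarStar imp one \<Longrightarrow> pK imp one"
  unfolding pM_def pL_def pStarStar_def pK_def by metis

lemma pB_iff_pBB_if_pEx: "pEx imp one \<Longrightarrow> pB imp one \<longleftrightarrow> pBB imp one"
  unfolding pEx_def pB_def pBB_def by metis

lemma pBB_if_pRe_pEx_pStar:
  assumes "pRe imp one" and "pEx imp one" and "pStar imp one"
  shows "pBB imp one"
  unfolding pBB_def
proof (intro allI)
  fix x y z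
  have "imp z (imp (imp z x) x) = one"
    using pD_if_pRe_pEx [OF assms(1,2)] unfolding pD_def by blast
  then have "imp (imp y z) (imp y (imp (imp z x) x)) = one"
    using \<open>pStar imp one\<close> unfolding pStar_def by blast
  moreover have "imp y (imp (imp z x) x) = imp (imp z x) (imp y x)"
    using \<open>pEx imp one\<close> unfolding pEx_def by blast
  ultimately show "imp (imp y z) (imp (imp z x) (imp y x)) = one"
    by simp
qed

lemma pStar_if_pN_pB: "pN imp one \<Longrightarrow> pB imp one \<Longrightarrow> pStar imp one"
  unfolding pN_def pB_def pStar_def by metis

lemma pTr_if_pN_pStar: "pN imp one \<Longrightarrow> pStar imp one \<Longrightarrow> pTr imp one"
  unfolding pN_def pStar_def pTr_def by metis

lemma pStarStar_if_pN_pBB: "pN imp one \<Longrightarrow> pBB imp one \<Longrightarrow> pStarStar imp one"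
  unfolding pN_def pBB_def pStarStar_def by metis

lemma pTr_if_pN_pStarStar: "pN imp one \<Longrightarrow> pStarStar imp one \<Longrightarrow> pTr imp one"
  unfolding pN_def pStarStar_def pTr_def by metis

lemma pRe_if_pM_pBB: "pM imp one \<Longrightarrow> pBB imp one \<Longrightarrow> pRe imp one"
  unfolding pM_def pBB_def pRe_def by metis

lemma pD_if_pM_pBB: "pM imp one \<Longrightarrow> pBB imp one \<Longrightarrow> pD imp one"
  unfolding pM_def pBB_def pD_def by metis

lemma pRe_if_pM_pB: "pM imp one \<Longrightarrow> pB imp one \<Longrightarrow> pRe imp one"
  unfolding pM_def pB_def pRe_def by metis

lemma pC_if_pBB_pD_pN:
  assumes "pBB imp one" and "pD imp one" and "pN imp one"
  shows "pC imp one"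
  unfolding pC_def
proof (intro allI)
  fix x y z
  have "imp (imp x (imp y z)) (imp (imp (imp y z) z) (imp x z)) = one"
    using \<open>pBB imp one\<close> unfolding pBB_def by blast
  moreover
  have "imp y (imp (imp y z) z) = one"
    using \<open>pD imp one\<close> unfolding pD_def by blast
  then have "imp (imp (imp (imp y z) z) (imp x z)) (imp y (imp x z)) = one"
    using pStarStar_if_pN_pBB [OF assms(3,1)] unfolding pStarStar_def by blast
  ultimately show "imp (imp x (imp y z)) (imp y (imp x z)) = one"
    using pTr_if_pN_pStarStar [OF assms(3) pStarStar_if_pN_pBB [OF assms(3,1)]]
    unfolding pTr_def by blast
qed

lemma pRe_if_pC_pK_pAn:
  assumes "pC imp one" and "pK imp one" and "pAn imp one"
  shows "pRe imp one"
  unfolding pRe_def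
proof
  fix x
  have N: "\<And>a. imp one a = one \<Longrightarrow> a = one"
    using pN_if_pK_pAn [OF assms(2,3)] unfolding pN_def by blast
  have "imp (imp x (imp one x)) (imp one (imp x x)) = one"
    using \<open>pC imp one\<close> unfolding pC_def by blast
  moreover have "imp x (imp one x) = one"
    using \<open>pK imp one\<close> unfolding pK_def by blast
  ultimately show "imp x x = one"
    using N by simp
qed

lemma pN_if_pBB_pD_pRe_pAn:
  assumes "pBB imp one" and "pD imp one" and "pRe imp one" and "pAn imp one"
  shows "pN imp one"
  unfolding pN_def
proof (intro allI impI)
  fix x
  assume one_x: "imp one x = one"
  have "imp (imp x one) (imp (imp one x) (imp x x)) = one"
    using \<open>pBB imp one\<close> unfolding pBB_def by blast
  then have "imp (imp x one) one = one"
    using one_x \<open>pRe imp one\<close> unfolding pRe_def by simp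
  moreover have "imp x (imp (imp x one) one) = one"
    using \<open>pD imp one\<close> unfolding pD_def by blast
  ultimately have "imp x one = one"
    by simp
  with one_x show "x = one"
    using \<open>pAn imp one\<close> unfolding pAn_def by blast
qed

lemma pStarStar_if_pRe_pEx_pTr:
  assumes "pRe imp one" and "pEx imp one" and "pTr imp one"
  shows "pStarStar imp one"
  unfolding pStarStar_def
proof (intro allI impI)
  fix x y z
  assume "imp y z = one"
  moreover have "imp z (imp (imp z x) x) = one"
    using pD_if_pRe_pEx [OF assms(1,2)] unfolding pD_def by blast
  ultimately have "imp y (imp (imp z x) x) = one"
    using \<open>pTr imp one\<close> unfolding pTr_def by blast
  moreover have "imp y (imp (imp z x) x) = imp (imp z x) (imp y x)"
    using \<open>pEx imp one\<close> unfolding pEx_def by blast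
  ultimately show "imp (imp z x) (imp y x) = one"
    by simp
qed

theorem proposition2p1:
  fixes imp :: "'a \<Rightarrow> 'a \<Rightarrow> 'a" and one :: 'a
  shows
   "(pRe imp one \<longrightarrow> pS imp one) \<and>
    (pM imp one \<longrightarrow> pN imp one) \<and>
    (pL imp one \<and> pAn imp one \<longrightarrow> pN imp one) \<and>
    (pK imp one \<and> pAn imp one \<longrightarrow> pN imp one) \<and>
    (pC imp one \<and> pAn imp one \<longrightarrow> pEx imp one) \<and>
    (pEx imp one \<and> pRe imp one \<longrightarrow> pC imp one) \<and>
    (pRe imp one \<and> pEx imp one \<longrightarrow> pD imp one) \<and>
    (pRe imp one \<and> pEx imp one \<and> pAn imp one \<longrightarrow> pM imp one) \<and>
    (pRe imp one \<and> pEx imp one \<and> pAn imp one \<longrightarrow> pN imp one) \<and>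
    (pRe imp one \<and> pK imp one \<longrightarrow> pL imp one) \<and>
    (pN imp one \<and> pK imp one \<longrightarrow> pL imp one) \<and>
    (pM imp one \<and> pK imp one \<longrightarrow> pL imp one) \<and>
    (pRe imp one \<and> pL imp one \<and> pEx imp one \<longrightarrow> pK imp one) \<and>
    (pM imp one \<and> pL imp one \<and> pB imp one \<longrightarrow> pK imp one) \<and>
    (pM imp one \<and> pL imp one \<and> pStarStar imp one \<longrightarrow> pK imp one) \<and>
    (pEx imp one \<longrightarrow> (pB imp one \<longleftrightarrow> pBB imp one)) \<and>
    (pEx imp one \<and> pB imp one \<longrightarrow> pBB imp one) \<and>
    (pEx imp one \<and> pBB imp one \<longrightarrow> pB imp one) \<and>
    (pRe imp one \<and> pEx imp one \<and> pStar imp one \<longrightarrow> pBB imp one) \<and>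
    (pN imp one \<and> pB imp one \<longrightarrow> pStar imp one) \<and>
    (pM imp one \<and> pB imp one \<longrightarrow> pStar imp one) \<and>
    (pN imp one \<and> pStar imp one \<longrightarrow> pTr imp one) \<and>
    (pM imp one \<and> pStar imp one \<longrightarrow> pTr imp one) \<and>
    (pN imp one \<and> pB imp one \<longrightarrow> pTr imp one) \<and>
    (pM imp one \<and> pB imp one \<longrightarrow> pTr imp one) \<and>
    (pN imp one \<and> pBB imp one \<longrightarrow> pStarStar imp one) \<and>
    (pM imp one \<and> pBB imp one \<longrightarrow> pStarStar imp one) \<and>
    (pN imp one \<and> pStarStar imp one \<longrightarrow> pTr imp one) \<and>
    (pM imp one \<and> pStarStar imp one \<longrightarrow> pTr imp one) \<and>
    (pN imp one \<and> pBB imp one \<longrightarrow> pTr imp one) \<and>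
    (pM imp one \<and> pBB imp one \<longrightarrow> pTr imp one) \<and>
    (pM imp one \<and> pBB imp one \<longrightarrow> pRe imp one) \<and>
    (pM imp one \<and> pBB imp one \<longrightarrow> pD imp one) \<and>
    (pM imp one \<and> pB imp one \<longrightarrow> pRe imp one) \<and>
    (pBB imp one \<and> pD imp one \<and> pN imp one \<longrightarrow> pC imp one) \<and>
    (pM imp one \<and> pBB imp one \<longrightarrow> pC imp one) \<and>
    (pBB imp one \<and> pD imp one \<and> pN imp one \<and> pAn imp one \<longrightarrow> pEx imp one) \<and>
    (pBB imp one \<and> pD imp one \<and> pL imp one \<and> pAn imp one \<longrightarrow> pEx imp one) \<and>
    (pM imp one \<and> pBB imp one \<and> pAn imp one \<longrightarrow> pEx imp one) \<and>
    (pB imp one \<and> pC imp one \<and> pK imp one \<and> pAn imp one \<longrightarrow> pRe imp one) \<and>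
    (pBB imp one \<and> pD imp one \<and> pRe imp one \<and> pAn imp one \<longrightarrow> pN imp one) \<and>
    (pRe imp one \<and> pEx imp one \<and> pTr imp one \<longrightarrow> pStarStar imp one)"
  \<comment> \<open>Items (14), (17), (21) and the primed ones chain the lemmas above;
    item (22) does not need (B).\<close>
  by (intro conjI impI iffI; (elim conjE)?)
    (blast intro: pS_if_pRe pN_if_pM pN_if_pL_pAn pN_if_pK_pAn pEx_if_pC_pAn pC_if_pEx_pRe
      pD_if_pRe_pEx pN_if_pRe_pEx_pAn pM_if_pRe_pEx_pAn pL_if_pRe_pK pL_if_pN_pK
      pK_if_pRe_pL_pEx pK_if_pM_pL_pB pK_if_pM_pL_pStarStar pB_iff_pBB_if_pEx [THEN iffD1]
      pB_iff_pBB_if_pEx [THEN iffD2] pBB_if_pRe_pEx_pStar pStar_if_pN_pB pTr_if_pN_pStar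
      pStarStar_if_pN_pBB pTr_if_pN_pStarStar pRe_if_pM_pBB pD_if_pM_pBB pRe_if_pM_pB
      pC_if_pBB_pD_pN pRe_if_pC_pK_pAn pN_if_pBB_pD_pRe_pAn pStarStar_if_pRe_pEx_pTr)+

end
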